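(* Let $p$ be a prime, $\mathbb{C}_p$ the field of complex $p$-adic numbers with norm $|\cdot|_p$, $a,b,c\in\mathbb{C}_p$ with $b\neq0$, $c\neq ab$, $f(x)=\frac{x+a}{bx+c}$ for $x\neq -c/b$. Fix a square root $\sqrt{(c-1)^2+4ab}$ and let $x_{1}=\frac{1-c+\sqrt{(c-1)^2+4ab}}{2b}$ (a fixed point of $f$). Assume $$\left|\frac{c-ab}{(bx_1+c)^2}\right|_p<1\qquad\text{and}\qquad \left|\frac{b}{bx_1+c}\right|_p=\left|\frac{2b}{1+c+\sqrt{(c-1)^2+4ab}}\right|_p\le 1.$$ Then $V_1(x_1)\subset A(x_1)$.
   Context: $V_1(x_1)=\{x\in\mathbb{C}_p:|x-x_1|_p<1\}$. The basin of attraction of a fixed point $x_0$ is $A(x_0)=\{y\in\mathbb{C}_p: f^n(y)\to x_0 \text{ as } n\to\infty\}$. *)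

theory Defs
  imports Complex_Main "HOL-Computational_Algebra.Polynomial"
begin

text \<open>We therefore describe it axiomatically: a field carrying a
non-archimedean absolute value which extends the p-adic absolute value of the
rationals (normalised by |p| = 1/p), which is complete and algebraically closed.\<close>

definition nonarch_abs :: "('a::field \<Rightarrow> real) \<Rightarrow> bool" where
  "nonarch_abs N \<longleftrightarrow>
     (\<forall>x. N x \<ge> 0) \<and> (\<forall>x. N x = 0 \<longleftrightarrow> x = 0) \<and>
     (\<forall>x y. N (x * y) = N x * N y) \<and>
     (\<forall>x y. N (x + y) \<le> max (N x) (N y))"

definition abs_complete :: "('a::field \<Rightarrow> real) \<Rightarrow> bool" where
  "abs_complete N \<longleftrightarrow>
     (\<forall>X::nat \<Rightarrow> 'a. (\<forall>e>0. \<exists>M. \<forall>m\<ge>M. \<forall>n\<ge>M. N (X m - X n) < e) \<longrightarrow>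
        (\<exists>L. (\<lambda>n. N (X n - L)) \<longlonglongrightarrow> 0))"

definition alg_closed_field :: "'a::field itself \<Rightarrow> bool" where
  "alg_closed_field _ \<longleftrightarrow> (\<forall>q::'a poly. degree q > 0 \<longrightarrow> (\<exists>x. poly q x = 0))"

definition complex_padic_like :: "nat \<Rightarrow> ('a::field \<Rightarrow> real) \<Rightarrow> bool" where
  "complex_padic_like p N \<longleftrightarrow>
     prime p \<and> nonarch_abs N \<and> N (of_nat p) = inverse (real p) \<and>
     abs_complete N \<and> alg_closed_field TYPE('a)"

definition V1 :: "('a::field \<Rightarrow> real) \<Rightarrow> 'a \<Rightarrow> 'a set" where
  "V1 N x1 = {x. N (x - x1) < 1}"

text \<open>Basin of attraction of x0 under f, where f is only defined off the pole
 (b x + c = 0): the whole orbit must stay in the domain and converge to x0.\<close>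
definition basin :: "('a::field \<Rightarrow> real) \<Rightarrow> ('a \<Rightarrow> 'a) \<Rightarrow> ('a \<Rightarrow> bool) \<Rightarrow> 'a \<Rightarrow> 'a set" where
  "basin N f D x0 = {y. (\<forall>n. D ((f ^^ n) y)) \<and> (\<lambda>n. N ((f ^^ n) y - x0)) \<longlonglongrightarrow> 0}"

end

theory Submission
  imports Defs
begin

(* Put d = b x1 + c. As x1 is a fixed point of f,
  f(x) - x1 = (c - ab)(x - x1) / ((bx + c) d), and bx + c = d + b(x - x1).
  For |x - x1| < 1 the hypothesis |b/d| <= 1 gives |b(x - x1)| < |d|, so the ultrametric
  inequality forces |bx + c| = |d|. Hence |f(x) - x1| = q |x - x1| with q = |(c - ab)/d^2| < 1:
  f maps V_1(x1) into itself and contracts the distance to x1 by the factor q. *)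

lemma quadratic_formula_root:
  fixes b c s :: "'a::field"
  assumes "(2::'a) \<noteq> 0" "b \<noteq> 0" "s\<^sup>2 = (c - 1)\<^sup>2 + 4 * a * b"
  shows "b * ((1 - c + s) / (2 * b))\<^sup>2 + (c - 1) * ((1 - c + s) / (2 * b)) = a"
proof -
  define x where "x = (1 - c + s) / (2 * b)"
  have "s = 2 * b * x + (c - 1)"
    using assms(1,2) unfolding x_def by simp
  then have "(2 * b * x + (c - 1))\<^sup>2 = (c - 1)\<^sup>2 + 4 * a * b"
    using assms(3) by simp
  then have "4 * b * (b * x\<^sup>2 + (c - 1) * x) = 4 * b * a"
    by (simp add: algebra_simps power2_eq_square)
  moreover have "4 * b \<noteq> 0"
    using assms(1,2) by (metis mult_eq_0_iff mult_2 numeral_Bit0)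
  ultimately show ?thesis
    unfolding x_def by simp
qed

lemma mobius_sub_fixed_point:
  fixes a b c x x1 :: "'a::field"
  assumes "b * x1\<^sup>2 + (c - 1) * x1 = a" "b * x + c \<noteq> 0" "b * x1 + c \<noteq> 0"
  shows "(x + a) / (b * x + c) - x1 = (c - a * b) * (x - x1) / ((b * x + c) * (b * x1 + c))"
proof -
  have "((x + a) - x1 * (b * x + c)) * (b * x1 + c) = (c - a * b) * (x - x1)"
    unfolding assms(1)[symmetric] by (simp add: algebra_simps power2_eq_square)
  then have numerator: "(x + a) - x1 * (b * x + c) = (c - a * b) * (x - x1) / (b * x1 + c)"
    using assms(3) by (simp add: eq_divide_eq)
  have "(x + a) / (b * x + c) - x1 = ((x + a) - x1 * (b * x + c)) / (b * x + c)"
    using assms(2) by (simp add: field_simps)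
  then show ?thesis
    by (simp only: numerator divide_divide_eq_left')
qed

context
  fixes N :: "'a::field \<Rightarrow> real"
  assumes nonarch: "nonarch_abs N"
begin

lemma nonarch_abs_nonneg: "N x \<ge> 0"
  using nonarch unfolding nonarch_abs_def by blast

lemma nonarch_abs_eq_0_iff: "N x = 0 \<longleftrightarrow> x = 0"
  using nonarch unfolding nonarch_abs_def by blast

lemma nonarch_abs_mult: "N (x * y) = N x * N y"
  using nonarch unfolding nonarch_abs_def by blast

lemma nonarch_abs_ultrametric: "N (x + y) \<le> max (N x) (N y)"
  using nonarch unfolding nonarch_abs_def by blast

lemma nonarch_abs_one: "N 1 = 1"
  using nonarch_abs_mult[of 1 1] nonarch_abs_eq_0_iff[of 1] by simp

lemma nonarch_abs_minus: "N (- x) = N x"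
proof -
  have "(N (-1) - 1) * (N (-1) + 1) = 0"
    using nonarch_abs_mult[of "-1" "-1"] by (simp add: nonarch_abs_one algebra_simps)
  then have "N (-1) = 1"
    using nonarch_abs_nonneg[of "-1"] by simp
  then show ?thesis
    using nonarch_abs_mult[of "-1" x] by simp
qed

lemma nonarch_abs_divide: "N (x / y) = N x / N y"
proof (cases "y = 0")
  case False
  then have "N x = N (x / y) * N y"
    by (simp flip: nonarch_abs_mult)
  then show ?thesis
    using False nonarch_abs_eq_0_iff by simp
qed (use nonarch_abs_eq_0_iff[of 0] in simp)

lemma nonarch_abs_add_eq_left:
  assumes "N y < N x"
  shows "N (x + y) = N x"
proof (rule antisym)
  show "N (x + y) \<le> N x"
    using nonarch_abs_ultrametric[of x y] assms by simp
  have "N x \<le> max (N (x + y)) (N y)"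
    using nonarch_abs_ultrametric[of "x + y" "- y"] by (simp add: nonarch_abs_minus)
  then show "N x \<le> N (x + y)"
    using assms by linarith
qed

lemma mobius_denominator_on_disc:
  fixes b c x x1 :: 'a
  assumes "b * x1 + c \<noteq> 0" "N (b / (b * x1 + c)) \<le> 1" "N (x - x1) < 1"
  shows "N (b * x + c) = N (b * x1 + c)"
proof -
  define d where "d = b * x1 + c"
  have "d \<noteq> 0"
    using assms(1) unfolding d_def .
  then have "N d > 0"
    using nonarch_abs_nonneg[of d] nonarch_abs_eq_0_iff[of d] by linarith
  have "N (b / d) * N (x - x1) \<le> N (x - x1)"
    using assms(2) nonarch_abs_nonneg unfolding d_def by (intro mult_left_le_one_le)
  then have "N d * (N (b / d) * N (x - x1)) < N d"
    using assms(3) \<open>N d > 0\<close> by simp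
  moreover have "b * (x - x1) = d * (b / d * (x - x1))"
    using \<open>d \<noteq> 0\<close> by simp
  ultimately have "N (b * (x - x1)) < N d"
    by (metis nonarch_abs_mult)
  have "N (b * x + c) = N (d + b * (x - x1))"
    unfolding d_def by (simp add: algebra_simps)
  also have "\<dots> = N d"
    using \<open>N (b * (x - x1)) < N d\<close> by (rule nonarch_abs_add_eq_left)
  finally show ?thesis
    unfolding d_def .
qed

lemma mobius_dist_fixed_point_on_disc:
  fixes a b c x x1 :: 'a
  assumes "b * x1\<^sup>2 + (c - 1) * x1 = a" "b * x1 + c \<noteq> 0"
    and "N (b / (b * x1 + c)) \<le> 1" "N (x - x1) < 1"
  shows "b * x + c \<noteq> 0"
    and "N ((x + a) / (b * x + c) - x1) = N ((c - a * b) / (b * x1 + c)\<^sup>2) * N (x - x1)"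
proof -
  define d where "d = b * x1 + c"
  have same_abs: "N (b * x + c) = N d"
    using mobius_denominator_on_disc[OF assms(2-4)] unfolding d_def .
  then show "b * x + c \<noteq> 0"
    using assms(2) nonarch_abs_eq_0_iff unfolding d_def by metis
  have "(x + a) / (b * x + c) - x1 = (c - a * b) * (x - x1) / ((b * x + c) * d)"
    using mobius_sub_fixed_point[OF assms(1) \<open>b * x + c \<noteq> 0\<close> assms(2)] unfolding d_def .
  then show "N ((x + a) / (b * x + c) - x1) = N ((c - a * b) / (b * x1 + c)\<^sup>2) * N (x - x1)"
    using same_abs unfolding d_def[symmetric]
    by (simp add: nonarch_abs_divide nonarch_abs_mult power2_eq_square)
qed

lemma V1_subset_basin_of_contraction:
  assumes "0 \<le> q" "q < 1"
    and contraction: "\<And>x. N (x - x0) < 1 \<Longrightarrow> D x \<and> N (f x - x0) \<le> q * N (x - x0)"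
  shows "V1 N x0 \<subseteq> basin N f D x0"
proof
  fix y
  assume "y \<in> V1 N x0"
  then have y: "N (y - x0) < 1"
    unfolding V1_def by simp
  have shrink: "q ^ n * N (y - x0) \<le> N (y - x0)" for n
    using assms(1,2) nonarch_abs_nonneg[of "y - x0"]
    by (simp add: mult_left_le_one_le power_le_one)
  have orbit: "N ((f ^^ n) y - x0) \<le> q ^ n * N (y - x0)" for n
  proof (induction n)
    case 0
    then show ?case by simp
  next
    case (Suc n)
    have "N ((f ^^ n) y - x0) < 1"
      using Suc.IH shrink[of n] y by linarith
    then have "N ((f ^^ Suc n) y - x0) \<le> q * N ((f ^^ n) y - x0)"
      using contraction by simp
    also have "\<dots> \<le> q ^ Suc n * N (y - x0)"
      using mult_left_mono[OF Suc.IH assms(1)] by (simp add: mult.assoc)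
    finally show ?case .
  qed
  have "N ((f ^^ n) y - x0) < 1" for n
    using orbit[of n] shrink[of n] y by linarith
  then have "D ((f ^^ n) y)" for n
    using contraction by blast
  moreover have "(\<lambda>n. N ((f ^^ n) y - x0)) \<longlonglongrightarrow> 0"
  proof (rule tendsto_sandwich[where f="\<lambda>_. 0"])
    show "(\<lambda>n. q ^ n * N (y - x0)) \<longlonglongrightarrow> 0"
      using assms(1,2) by (intro tendsto_mult_left_zero LIMSEQ_power_zero) simp
  qed (use orbit nonarch_abs_nonneg in auto)
  ultimately show "y \<in> basin N f D x0"
    unfolding basin_def by simp
qed

end

lemma complex_padic_like_two_neq_zero:
  assumes "complex_padic_like p (N :: 'a::field \<Rightarrow> real)"
  shows "(2::'a) \<noteq> 0"
proof
  assume two: "(2::'a) = 0"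
  have "prime p" and nonarch: "nonarch_abs N" and abs_p: "N (of_nat p) = inverse (real p)"
    using assms unfolding complex_padic_like_def by auto
  obtain k where "p = 2 * k \<or> p = 2 * k + 1"
    by (metis evenE oddE)
  then have "(of_nat p :: 'a) \<in> {0, 1}"
    using two by auto
  then have "N (of_nat p) \<in> {0, 1}"
    using nonarch_abs_one[OF nonarch] nonarch_abs_eq_0_iff[OF nonarch, of 0] by auto
  moreover have "0 < inverse (real p)" "inverse (real p) < 1"
    using prime_ge_2_nat[OF \<open>prime p\<close>] by (auto simp: inverse_less_1_iff)
  ultimately show False
    using abs_p by auto
qed

theorem lemma3p5:
  fixes p :: nat and N :: "'a::field \<Rightarrow> real" and a b c s :: 'a
  assumes "complex_padic_like p N"
    and "b \<noteq> 0" and "c \<noteq> a * b"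
    and "s ^ 2 = (c - 1) ^ 2 + 4 * a * b"
    and "b * ((1 - c + s) / (2 * b)) + c \<noteq> 0"
    and "N ((c - a * b) / (b * ((1 - c + s) / (2 * b)) + c) ^ 2) < 1"
    and "N (b / (b * ((1 - c + s) / (2 * b)) + c)) = N (2 * b / (1 + c + s))"
    and "N (2 * b / (1 + c + s)) \<le> 1"
  shows "V1 N ((1 - c + s) / (2 * b))
         \<subseteq> basin N (\<lambda>x. (x + a) / (b * x + c)) (\<lambda>x. b * x + c \<noteq> 0) ((1 - c + s) / (2 * b))"
proof -
  define x1 where "x1 = (1 - c + s) / (2 * b)"
  define q where "q = N ((c - a * b) / (b * x1 + c)\<^sup>2)"
  have nonarch: "nonarch_abs N"
    using assms(1) unfolding complex_padic_like_def by simp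
  have fixed_point: "b * x1\<^sup>2 + (c - 1) * x1 = a"
    unfolding x1_def
    using quadratic_formula_root[OF complex_padic_like_two_neq_zero[OF assms(1)] assms(2,4)] .
  have contraction: "b * x + c \<noteq> 0 \<and> N ((x + a) / (b * x + c) - x1) \<le> q * N (x - x1)"
    if "N (x - x1) < 1" for x
    using mobius_dist_fixed_point_on_disc[OF nonarch fixed_point _ _ that] assms(5,7,8)
    unfolding q_def x1_def by simp
  have "0 \<le> q" "q < 1"
    using assms(6) nonarch_abs_nonneg[OF nonarch] unfolding q_def x1_def by simp_all
  then show ?thesis
    unfolding x1_def[symmetric] using contraction by (rule V1_subset_basin_of_contraction[OF nonarch])
qed

end
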